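(* Let $p_A,p_D,p_I\in(0,1)$, $q_A>0$, $q_D>0$, $q_I\ge0$, and set $r_A=p_A/q_A$, $r_D=p_D/q_D$, and (whenever $q_I<\frac12$) $\varepsilon=\Bigl(\frac{1}{r_D}\bigl(\frac{1}{\sqrt{1/2+q_I}}-1\bigr)\Bigr)^{-1/2}$. Let $J_A,J_D,J_I$ be the functions defined in the context, and consider the two three-player games on strategy sets $\alpha\in(0,1]$, $\beta\in(0,1]$, $\gamma\in[0,1]$: Game C (unknown malicious insider): the attacker minimizes $J_A(\alpha,\beta,\gamma)$ over $\alpha$, the defender minimizes $J_D(\alpha,\beta,0)$ over $\beta$, the insider maximizes $J_I(\alpha,\beta,\gamma)$ over $\gamma$; Game D (unknown inadvertent insider): the attacker minimizes $J_A(\alpha,\beta,0)$ over $\alpha$, the defender minimizes $J_D(\alpha,\beta,0)$ over $\beta$, the insider maximizes $J_I(\alpha,\beta,\gamma)$ over $\gamma$. A triple $(\alpha^*,\beta^*,\gamma^* )$ is a Nash equilibrium of a game if $\alpha^*$ minimizes the attacker's objective with $(\beta^*,\gamma^* )$ fixed, $\beta^*$ minimizes the defender's objective with $(\alpha^*,\gamma^* )$ fixed, and $\gamma^*$ maximizes the insider's objective with $(\alpha^*,\beta^* )$ fixed. Then the following hold. For Game C: (C1) if $\frac{r_A}{p_A}=r_D\le1$ and $q_I\le\bigl(\frac{1}{r_A/p_A+1}\bigr)^2-\frac12$, then for every $\beta^*\in[\varepsilon,1]$ the triple $\bigl(\frac{r_D}{\beta^*},\beta^*,1\bigr)$ is a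 Nash equilibrium; (C2) if $\frac{r_A}{p_A}\le1$, $\frac{r_A}{p_A}<r_D$ and $q_I\le\bigl(\frac{1}{r_A/p_A+1}\bigr)^2-\frac12$, then $\bigl(\frac{r_A}{p_A},1,1\bigr)$ is a Nash equilibrium. For Game D: (D1) if $r_A=r_D\le1$ and $q_I\le\bigl(\frac{1}{r_A+1}\bigr)^2-\frac12$, then for every $\beta^*\in[\varepsilon,1]$ the triple $\bigl(\frac{r_D}{\beta^*},\beta^*,1\bigr)$ is a Nash equilibrium; (D2) if $r_A\le1$, $r_A<r_D$ and $q_I\le\bigl(\frac{1}{r_A+1}\bigr)^2-\frac12$, then $(r_A,1,1)$ is a Nash equilibrium. For each of Game C and Game D: (i) if $r_A=r_D\le1$ and $q_I>\bigl(\frac1{r_A+1}\bigr)^2-\frac12$, then $\bigl(\frac{r_D}{\beta^*},\beta^*,0\bigr)$ is a Nash equilibrium for every $\beta^*\in[r_D,1]$; (ii) if $r_A=r_D\le1$ and $q_I\le\bigl(\frac1{r_A+1}\bigr)^2-\frac12$, then $\bigl(\frac{r_D}{\beta^*},\beta^*,0\bigr)$ is a Nash equilibrium for every $\beta^*\in[r_D,\varepsilon]$; (iii) if $r_A\le1$, $r_A<r_D$ and $q_I\ge\bigl(\frac1{r_A+1}\bigr)^2-\frac12$, then $(r_A,1,0)$ is a Nash equilibrium; (iv) if $r_D\le1$ and $r_D<r_A$, then $(1,r_D,0)$ is a Nash equilibrium; (v) if $r_A>1$ and $r_D>1$, then $(1,1,0)$ is a Nash equilibrium.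
   Context: For $\alpha,\beta\in(0,1]$ let $x(t)=\frac{\alpha}{\alpha+\beta}\bigl(1-e^{-(\alpha+\beta)t}\bigr)$, the solution of $\dot x=\alpha(1-x)-\beta x$, $x(0)=0$ (fraction of compromised resources). For $\gamma\in[0,1]$ define $J_A(\alpha,\beta,\gamma)=\lim_{T\to\infty}\frac1T\int_0^T\bigl[p_A(1-\gamma)^2+q_A\alpha^2+\gamma^2\bigr](1-x(t))^2\,dt$, $J_D(\alpha,\beta,\gamma)=\lim_{T\to\infty}\frac1T\int_0^T\bigl[p_D(1-\gamma)^2+q_D\beta^2+\gamma^2\bigr]x(t)^2\,dt$, $J_I(\alpha,\beta,\gamma)=\lim_{T\to\infty}\frac1T\int_0^T\bigl[(p_I+\gamma^2)(1-x(t))^2-(q_I\gamma+\tfrac12\gamma^2)\bigr]dt$. Here $\alpha$ is the attacker's strategy, $\beta$ the defender's, $\gamma$ the insider's. The paper phrases the conclusion as these equilibrium defense strategies $\beta^*$ being "acceptable solutions" to the defense problem with unknown insider threats. *)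

theory Defs
  imports "HOL-Analysis.Analysis"
begin

text \<open>Fraction of compromised resources: solution of x' = a(1-x) - b x, x(0)=0.\<close>
definition xfrac :: "real \<Rightarrow> real \<Rightarrow> real \<Rightarrow> real" where
  "xfrac a b t = a / (a + b) * (1 - exp (- (a + b) * t))"

definition time_avg :: "(real \<Rightarrow> real) \<Rightarrow> real" where
  "time_avg f = Lim at_top (\<lambda>T. (1 / T) * integral {0..T} f)"

definition JA :: "real \<Rightarrow> real \<Rightarrow> real \<Rightarrow> real \<Rightarrow> real \<Rightarrow> real" where
  "JA pA qA a b g = time_avg (\<lambda>t. (pA * (1 - g)^2 + qA * a^2 + g^2) * (1 - xfrac a b t)^2)"

definition JD :: "real \<Rightarrow> real \<Rightarrow> real \<Rightarrow> real \<Rightarrow> real \<Rightarrow> real" where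
  "JD pD qD a b g = time_avg (\<lambda>t. (pD * (1 - g)^2 + qD * b^2 + g^2) * (xfrac a b t)^2)"

definition JI :: "real \<Rightarrow> real \<Rightarrow> real \<Rightarrow> real \<Rightarrow> real \<Rightarrow> real" where
  "JI pI qI a b g = time_avg (\<lambda>t. (pI + g^2) * (1 - xfrac a b t)^2 - (qI * g + g^2 / 2))"

definition is_NE ::
  "(real \<Rightarrow> real \<Rightarrow> real \<Rightarrow> real) \<Rightarrow> (real \<Rightarrow> real \<Rightarrow> real \<Rightarrow> real) \<Rightarrow>
   (real \<Rightarrow> real \<Rightarrow> real \<Rightarrow> real) \<Rightarrow> real \<Rightarrow> real \<Rightarrow> real \<Rightarrow> bool" where
  "is_NE fA fD fI a b g \<longleftrightarrow>
     a \<in> {0<..1} \<and> b \<in> {0<..1} \<and> g \<in> {0..1} \<and>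
     (\<forall>a' \<in> {0<..1}. fA a b g \<le> fA a' b g) \<and>
     (\<forall>b' \<in> {0<..1}. fD a b g \<le> fD a b' g) \<and>
     (\<forall>g' \<in> {0..1}. fI a b g' \<le> fI a b g)"

definition gameC_NE :: "real \<Rightarrow> real \<Rightarrow> real \<Rightarrow> real \<Rightarrow> real \<Rightarrow> real \<Rightarrow> real \<Rightarrow> real \<Rightarrow> real \<Rightarrow> bool" where
  "gameC_NE pA qA pD qD pI qI a b g =
     is_NE (\<lambda>a b g. JA pA qA a b g) (\<lambda>a b g. JD pD qD a b 0) (\<lambda>a b g. JI pI qI a b g) a b g"

definition gameD_NE :: "real \<Rightarrow> real \<Rightarrow> real \<Rightarrow> real \<Rightarrow> real \<Rightarrow> real \<Rightarrow> real \<Rightarrow> real \<Rightarrow> real \<Rightarrow> bool" where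
  "gameD_NE pA qA pD qD pI qI a b g =
     is_NE (\<lambda>a b g. JA pA qA a b 0) (\<lambda>a b g. JD pD qD a b 0) (\<lambda>a b g. JI pI qI a b g) a b g"

definition eps_thr :: "real \<Rightarrow> real \<Rightarrow> real" where
  "eps_thr rD qI = ((1 / rD) * (1 / sqrt (1/2 + qI) - 1)) powr (-1/2)"

end

theory Submission
  imports Defs "HOL-Real_Asymp.Real_Asymp"
begin

(* The fraction x(t) converges exponentially fast to its steady state a/(a+b), so every long-run
   average equals its integrand evaluated at the steady state and the games become static.
   A player of effort u facing effort v then pays (P + Q u^2) (v/(u+v))^2, whose minimum over
   (0,1] lies at u = min 1 (P/(Q v)); hence the attacker-defender pair is in equilibrium at
   (r/b, b) for r_A = r_D = r and any b in [r,1], at (r_A, 1) if r_A <= min 1 r_D, at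
   (1, r_D) symmetrically, and at (1, 1) if both ratios are at least 1.
   The insider's payoff is p_I s + gamma^2 (s - 1/2) - q_I gamma, where s = (b/(a+b))^2:
   gamma = 1 is optimal if q_I <= s - 1/2 and gamma = 0 if q_I >= s - 1/2, and along the
   family (r/b, b) this threshold is crossed exactly at b = epsilon. A malicious insider at
   full effort replaces the attacker's weight p_A (1-gamma)^2 + gamma^2 by 1, which is why
   Game C involves r_A/p_A = 1/q_A instead of r_A. *)

lemma time_avg_exp_decay:
  fixes A B C k :: real
  assumes k: "k > 0"
  shows "time_avg (\<lambda>t. A + B * exp (-k*t) + C * (exp (-k*t))^2) = A"
proof -
  let ?f = "\<lambda>t. A + B * exp (-k*t) + C * (exp (-k*t))^2"
  let ?F = "\<lambda>t::real. A*t - B * exp (-k*t) / k - C * (exp (-k*t))^2 / (2*k)"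
  have integral_f: "integral {0..T} ?f = ?F T - ?F 0" if "T \<ge> 0" for T
  proof (rule integral_unique, rule fundamental_theorem_of_calculus[OF that])
    fix x assume "x \<in> {0..T}"
    have "(?F has_real_derivative ?f x) (at x within {0..T})"
      using k by (auto intro!: derivative_eq_intros simp: field_simps power2_eq_square)
    then show "(?F has_vector_derivative ?f x) (at x within {0..T})"
      by (simp add: has_real_derivative_iff_has_vector_derivative)
  qed
  have "((\<lambda>T. A + (B/k + C/(2*k)) / T
      - (B * exp (-k*T) / k + C * (exp (-k*T))^2 / (2*k)) / T) \<longlongrightarrow> A) at_top"
    using k by real_asymp
  moreover have "\<forall>\<^sub>F T in at_top.
      A + (B/k + C/(2*k)) / T - (B * exp (-k*T) / k + C * (exp (-k*T))^2 / (2*k)) / T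
      = (1 / T) * integral {0..T} ?f"
    using eventually_gt_at_top[of 0]
  proof eventually_elim
    case (elim T)
    then show ?case
      using k by (subst integral_f) (auto simp: field_simps)
  qed
  ultimately have "((\<lambda>T. (1 / T) * integral {0..T} ?f) \<longlongrightarrow> A) at_top"
    by (rule Lim_transform_eventually)
  then show ?thesis
    unfolding time_avg_def by (intro tendsto_Lim) auto
qed

lemma time_avg_intact_sq:
  fixes a b K D :: real
  assumes "a + b > 0"
  shows "time_avg (\<lambda>t. K * (1 - xfrac a b t)^2 - D) = K * (b/(a+b))^2 - D"
proof -
  have intact: "1 - xfrac a b t = b/(a+b) + a/(a+b) * exp (-(a+b) * t)" for t
    using assms unfolding xfrac_def by (simp add: divide_simps) (simp add: algebra_simps)
  have eq: "(\<lambda>t. K * (1 - xfrac a b t)^2 - D) = (\<lambda>t. (K * (b/(a+b))^2 - D)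
      + (2*K*(b/(a+b))*(a/(a+b))) * exp (-(a+b) * t) + (K*(a/(a+b))^2) * (exp (-(a+b) * t))^2)"
    unfolding intact by (simp add: power2_eq_square algebra_simps)
  show ?thesis
    unfolding eq by (rule time_avg_exp_decay) (use assms in simp)
qed

lemma time_avg_compromised_sq:
  fixes a b K :: real
  assumes "a + b > 0"
  shows "time_avg (\<lambda>t. K * (xfrac a b t)^2) = K * (a/(a+b))^2"
proof -
  have eq: "(\<lambda>t. K * (xfrac a b t)^2) = (\<lambda>t. K * (a/(a+b))^2
      + (-2*K*(a/(a+b))^2) * exp (-(a+b) * t) + (K*(a/(a+b))^2) * (exp (-(a+b) * t))^2)"
    unfolding xfrac_def by (simp add: power2_eq_square algebra_simps)
  show ?thesis
    unfolding eq by (rule time_avg_exp_decay) (use assms in simp)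
qed

definition steady_cost :: "real \<Rightarrow> real \<Rightarrow> real \<Rightarrow> real \<Rightarrow> real" where
  "steady_cost P Q u v = (P + Q * u^2) * (v / (u + v))^2"

lemma JA_eq_steady_cost:
  "a + b > 0 \<Longrightarrow> JA pA qA a b g = steady_cost (pA * (1 - g)^2 + g^2) qA a b"
  unfolding JA_def steady_cost_def using time_avg_intact_sq[of a b _ 0] by simp

lemma JD_eq_steady_cost:
  "a + b > 0 \<Longrightarrow> JD pD qD a b g = steady_cost (pD * (1 - g)^2 + g^2) qD b a"
  unfolding JD_def steady_cost_def by (simp add: time_avg_compromised_sq add.commute)

lemma JI_eq_steady_state:
  "a + b > 0 \<Longrightarrow> JI pI qI a b g = (pI + g^2) * (b/(a+b))^2 - (qI * g + g^2 / 2)"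
  unfolding JI_def by (rule time_avg_intact_sq)

lemma steady_cost_le_iff:
  assumes "0 < u" "0 < v" "0 < w"
  shows "steady_cost P Q u v \<le> steady_cost P Q w v \<longleftrightarrow>
         (P + Q * u^2) * (w + v)^2 \<le> (P + Q * w^2) * (u + v)^2"
proof -
  have "steady_cost P Q u v \<le> steady_cost P Q w v \<longleftrightarrow>
      (P + Q * u^2) * (w + v)^2 * v^2 \<le> (P + Q * w^2) * (u + v)^2 * v^2"
    using assms by (simp add: steady_cost_def power_divide field_simps)
  also have "\<dots> \<longleftrightarrow> (P + Q * u^2) * (w + v)^2 \<le> (P + Q * w^2) * (u + v)^2"
    using assms by (simp add: mult_le_cancel_right_pos)
  finally show ?thesis .
qed

lemma steady_cost_cross_diff:
  fixes P Q u v w :: real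
  shows "(P + Q * w^2) * (u + v)^2 - (P + Q * u^2) * (w + v)^2
    = (u - w) * (P * (u + w + 2 * v) - Q * v * (2 * u * w + v * (u + w)))"
  by (simp add: power2_eq_square algebra_simps)

lemma steady_cost_min_interior:
  assumes "0 \<le> Q" "0 < u" "0 < v" "Q * u * v = P" "0 < w"
  shows "steady_cost P Q u v \<le> steady_cost P Q w v"
proof -
  have bracket:
    "P * (u + w + 2 * v) - Q * v * (2 * u * w + v * (u + w)) = Q * v * (u + v) * (u - w)"
    using assms(4) by (auto simp: algebra_simps)
  have "(P + Q * w^2) * (u + v)^2 - (P + Q * u^2) * (w + v)^2 = Q * v * (u + v) * (u - w)^2"
    by (simp only: steady_cost_cross_diff bracket) (simp add: power2_eq_square)
  also have "\<dots> \<ge> 0"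
    using assms by simp
  finally show ?thesis
    using assms by (simp add: steady_cost_le_iff)
qed

lemma steady_cost_min_at_one:
  assumes "0 \<le> Q" "0 < v" "Q * v \<le> P" "0 < w" "w \<le> 1"
  shows "steady_cost P Q 1 v \<le> steady_cost P Q w v"
proof -
  have "(1 + w + 2 * v) - (2 * w + v * (1 + w)) = (1 - w) * (1 + v)"
    by (simp add: algebra_simps)
  then have "2 * w + v * (1 + w) \<le> 1 + w + 2 * v"
    using assms by (smt (verit) mult_nonneg_nonneg)
  then have "Q * v * (2 * w + v * (1 + w)) \<le> Q * v * (1 + w + 2 * v)"
    using assms by (intro mult_left_mono) auto
  also have "\<dots> \<le> P * (1 + w + 2 * v)"
    using assms by (intro mult_right_mono) auto
  finally have "0 \<le> (1 - w) * (P * (1 + w + 2 * v) - Q * v * (2 * 1 * w + v * (1 + w)))"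
    using assms by simp
  then show ?thesis
    using assms steady_cost_cross_diff[of P Q w 1 v] by (simp add: steady_cost_le_iff)
qed

definition mutual_best_response :: "real \<Rightarrow> real \<Rightarrow> real \<Rightarrow> real \<Rightarrow> real \<Rightarrow> real \<Rightarrow> bool" where
  "mutual_best_response PA QA PD QD a b \<longleftrightarrow> a \<in> {0<..1} \<and> b \<in> {0<..1} \<and>
     (\<forall>u \<in> {0<..1}. steady_cost PA QA a b \<le> steady_cost PA QA u b) \<and>
     (\<forall>v \<in> {0<..1}. steady_cost PD QD b a \<le> steady_cost PD QD v a)"

lemma mutual_best_response_swap:
  "mutual_best_response PA QA PD QD a b \<longleftrightarrow> mutual_best_response PD QD PA QA b a"
  unfolding mutual_best_response_def by auto

lemma mutual_best_response_interior:
  assumes "0 < QA" "0 < QD" "PA / QA = r" "PD / QD = r" "0 < r" "r \<le> b" "b \<le> 1"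
  shows "mutual_best_response PA QA PD QD (r / b) b"
proof -
  have "0 < b" "r / b \<le> 1"
    using assms by auto
  moreover have "QA * (r / b) * b = PA" "QD * b * (r / b) = PD"
    using assms \<open>0 < b\<close> by (auto simp: field_simps)
  ultimately show ?thesis
    unfolding mutual_best_response_def using assms
    by (auto intro!: steady_cost_min_interior)
qed

lemma mutual_best_response_corner:
  assumes "0 < PA" "0 < QA" "0 < QD" "PA / QA \<le> 1" "PA / QA \<le> PD / QD"
  shows "mutual_best_response PA QA PD QD (PA / QA) 1"
proof -
  have "QA * (PA / QA) * 1 = PA" "QD * (PA / QA) \<le> PD"
    using assms by (auto simp: field_simps)
  then show ?thesis
    unfolding mutual_best_response_def using assms
    by (auto intro!: steady_cost_min_interior steady_cost_min_at_one)
qed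

lemma mutual_best_response_one_one:
  assumes "0 < QA" "0 < QD" "1 \<le> PA / QA" "1 \<le> PD / QD"
  shows "mutual_best_response PA QA PD QD 1 1"
proof -
  have "QA * 1 \<le> PA" "QD * 1 \<le> PD"
    using assms by (auto simp: field_simps)
  then show ?thesis
    unfolding mutual_best_response_def using assms
    by (auto intro!: steady_cost_min_at_one)
qed

lemma insider_full_effort_best:
  fixes s qI pI g :: real
  assumes "0 \<le> qI" "qI \<le> s - 1/2" "0 \<le> g" "g \<le> 1"
  shows "(pI + g^2) * s - (qI * g + g^2 / 2) \<le> (pI + 1) * s - (qI + 1/2)"
proof -
  have "g^2 \<le> g"
    using assms by (simp add: power2_eq_square mult_left_le_one_le)
  then have "g^2 * (s - 1/2) \<le> g * (s - 1/2)"
    using assms by (intro mult_right_mono) auto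
  moreover have "g * (s - 1/2 - qI) \<le> s - 1/2 - qI"
    using assms by (simp add: mult_left_le_one_le)
  ultimately show ?thesis
    by (simp add: algebra_simps)
qed

lemma insider_no_effort_best:
  fixes s qI pI g :: real
  assumes "0 \<le> qI" "s - 1/2 \<le> qI" "0 \<le> g" "g \<le> 1"
  shows "(pI + g^2) * s - (qI * g + g^2 / 2) \<le> pI * s"
proof -
  have "g^2 \<le> g"
    using assms by (simp add: power2_eq_square mult_left_le_one_le)
  have "g^2 * (s - 1/2) \<le> g^2 * qI"
    using assms by (intro mult_left_mono) auto
  also have "\<dots> \<le> g * qI"
    using \<open>g^2 \<le> g\<close> assms by (intro mult_right_mono)
  finally show ?thesis
    by (simp add: algebra_simps)
qed

lemma NE_no_effort:
  assumes mbr: "mutual_best_response pA qA pD qD a b"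
    and "0 \<le> qI" "(b/(a+b))^2 - 1/2 \<le> qI"
  shows "gameC_NE pA qA pD qD pI qI a b 0 \<and> gameD_NE pA qA pD qD pI qI a b 0"
proof -
  have ab: "0 < a" "a \<le> 1" "0 < b" "b \<le> 1"
    using mbr by (auto simp: mutual_best_response_def)
  have "JI pI qI a b g \<le> JI pI qI a b 0" if "0 \<le> g" "g \<le> 1" for g
    using insider_no_effort_best[OF assms(2,3) that, of pI] ab by (simp add: JI_eq_steady_state)
  then show ?thesis
    using mbr ab unfolding gameC_NE_def gameD_NE_def is_NE_def mutual_best_response_def
    by (auto simp: JA_eq_steady_cost JD_eq_steady_cost)
qed

lemma gameC_NE_full_effort:
  assumes mbr: "mutual_best_response 1 qA pD qD a b"
    and "0 \<le> qI" "qI \<le> (b/(a+b))^2 - 1/2"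
  shows "gameC_NE pA qA pD qD pI qI a b 1"
proof -
  have ab: "0 < a" "a \<le> 1" "0 < b" "b \<le> 1"
    using mbr by (auto simp: mutual_best_response_def)
  have "JI pI qI a b g \<le> JI pI qI a b 1" if "0 \<le> g" "g \<le> 1" for g
    using insider_full_effort_best[OF assms(2,3) that, of pI] ab by (simp add: JI_eq_steady_state)
  then show ?thesis
    using mbr ab unfolding gameC_NE_def is_NE_def mutual_best_response_def
    by (auto simp: JA_eq_steady_cost JD_eq_steady_cost)
qed

lemma gameD_NE_full_effort:
  assumes mbr: "mutual_best_response pA qA pD qD a b"
    and "0 \<le> qI" "qI \<le> (b/(a+b))^2 - 1/2"
  shows "gameD_NE pA qA pD qD pI qI a b 1"
proof -
  have ab: "0 < a" "a \<le> 1" "0 < b" "b \<le> 1"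
    using mbr by (auto simp: mutual_best_response_def)
  have "JI pI qI a b g \<le> JI pI qI a b 1" if "0 \<le> g" "g \<le> 1" for g
    using insider_full_effort_best[OF assms(2,3) that, of pI] ab by (simp add: JI_eq_steady_state)
  then show ?thesis
    using mbr ab unfolding gameD_NE_def is_NE_def mutual_best_response_def
    by (auto simp: JA_eq_steady_cost JD_eq_steady_cost)
qed

(* b/(r/b + b) is the intact share b/(a+b) along the equilibrium family a = r/b. *)
lemma steady_share_eq:
  fixes r b :: real
  shows "b \<noteq> 0 \<Longrightarrow> b/(r/b + b) = b^2 / (r + b^2)"
  by (simp add: field_simps power2_eq_square)

lemma steady_share_mono:
  fixes r b c :: real
  assumes "0 < r" "0 < b" "b \<le> c"
  shows "b/(r/b + b) \<le> c/(r/c + c)"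
proof -
  have "r * b^2 \<le> r * c^2"
    using assms by (intro mult_left_mono power_mono) auto
  then have "b^2 * (r + c^2) \<le> c^2 * (r + b^2)"
    by (simp add: algebra_simps)
  moreover have "0 < r + b^2" "0 < r + c^2"
    using assms by (auto intro: add_pos_nonneg)
  ultimately show ?thesis
    using assms
    by (simp add: steady_share_eq pos_divide_le_eq le_divide_eq mult.commute mult.left_commute)
qed

lemma eps_thr_eq_sqrt:
  fixes r qI :: real
  assumes "0 < r" "-1/2 < qI" "qI < 1/2"
  defines "\<sigma> \<equiv> sqrt (1/2 + qI)"
  shows "eps_thr r qI = sqrt (r * \<sigma> / (1 - \<sigma>))"
proof -
  have \<sigma>: "0 < \<sigma>" "\<sigma> < 1"
    using assms by (auto simp: \<sigma>_def)
  have "eps_thr r qI = ((1 - \<sigma>) / (r * \<sigma>)) powr (-(1/2))"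
    unfolding eps_thr_def \<sigma>_def[symmetric] using \<sigma> by (simp add: field_simps)
  also have "\<dots> = inverse (sqrt ((1 - \<sigma>) / (r * \<sigma>)))"
    using \<sigma> assms by (simp add: powr_minus powr_half_sqrt)
  also have "\<dots> = sqrt (r * \<sigma> / (1 - \<sigma>))"
    by (simp flip: real_sqrt_inverse)
  finally show ?thesis .
qed

lemma steady_share_threshold:
  fixes r b qI :: real
  assumes "0 < r" "0 < b" "-1/2 < qI" "qI < 1/2"
  shows "(b/(r/b + b))^2 - 1/2 \<le> qI \<longleftrightarrow> b \<le> eps_thr r qI"
    and "qI \<le> (b/(r/b + b))^2 - 1/2 \<longleftrightarrow> eps_thr r qI \<le> b"
proof -
  define \<sigma> where "\<sigma> = sqrt (1/2 + qI)"
  have \<sigma>: "0 < \<sigma>" "\<sigma> < 1" "\<sigma>^2 = 1/2 + qI"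
    using assms by (auto simp: \<sigma>_def)
  have "0 < r + b^2"
    using assms by (simp add: add_pos_nonneg)
  define t where "t = b^2 / (r + b^2)"
  have t: "0 < t" "b/(r/b + b) = t"
    using assms \<open>0 < r + b^2\<close> by (simp_all add: t_def steady_share_eq)
  have "eps_thr r qI = sqrt (r * \<sigma> / (1 - \<sigma>))"
    using eps_thr_eq_sqrt[OF assms(1,3,4)] unfolding \<sigma>_def .
  moreover have "0 \<le> r * \<sigma> / (1 - \<sigma>)"
    using \<sigma> assms by simp
  ultimately have eps: "0 \<le> eps_thr r qI" "(eps_thr r qI)^2 = r * \<sigma> / (1 - \<sigma>)"
    by simp_all
  have "t \<le> \<sigma> \<longleftrightarrow> b^2 * (1 - \<sigma>) \<le> r * \<sigma>"
    using \<open>0 < r + b^2\<close> by (simp add: t_def pos_divide_le_eq algebra_simps)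
  also have "\<dots> \<longleftrightarrow> b^2 \<le> (eps_thr r qI)^2"
    using \<sigma> by (simp add: eps pos_le_divide_eq)
  finally have le: "t \<le> \<sigma> \<longleftrightarrow> b \<le> eps_thr r qI"
    using assms eps(1) by simp
  have "\<sigma> \<le> t \<longleftrightarrow> r * \<sigma> \<le> b^2 * (1 - \<sigma>)"
    using \<open>0 < r + b^2\<close> by (simp add: t_def pos_le_divide_eq algebra_simps)
  also have "\<dots> \<longleftrightarrow> (eps_thr r qI)^2 \<le> b^2"
    using \<sigma> by (simp add: eps pos_divide_le_eq)
  finally have ge: "\<sigma> \<le> t \<longleftrightarrow> eps_thr r qI \<le> b"
    using assms eps(1) by simp
  have "(b/(r/b + b))^2 - 1/2 \<le> qI \<longleftrightarrow> t \<le> \<sigma>"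
    "qI \<le> (b/(r/b + b))^2 - 1/2 \<longleftrightarrow> \<sigma> \<le> t"
    using power_mono_iff[of t \<sigma> 2] power_mono_iff[of \<sigma> t 2] t \<sigma> by auto
  with le ge show "(b/(r/b + b))^2 - 1/2 \<le> qI \<longleftrightarrow> b \<le> eps_thr r qI"
    "qI \<le> (b/(r/b + b))^2 - 1/2 \<longleftrightarrow> eps_thr r qI \<le> b"
    by simp_all
qed

lemma eps_thr_bounds:
  fixes r qI :: real
  assumes "0 < r" "r \<le> 1" "0 \<le> qI" "qI \<le> (1/(r+1))^2 - 1/2"
  shows "qI < 1/2" "r \<le> eps_thr r qI" "eps_thr r qI \<le> 1"
proof -
  have "(1/(r+1))^2 < 1^2"
    using assms by (intro power_strict_mono) auto
  then show "qI < 1/2"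
    using assms by simp
  then have "-1/2 < qI" "qI < 1/2"
    using assms by simp_all
  note threshold = steady_share_threshold[OF assms(1) _ this]
  have "r/(r/r + r) \<le> 1/2"
    using assms by (simp add: field_simps)
  then have "(r/(r/r + r))^2 \<le> (1/2)^2"
    using assms by (intro power_mono) auto
  moreover have "(1/2::real)^2 < 1/2"
    by (simp add: power2_eq_square)
  ultimately have "(r/(r/r + r))^2 - 1/2 \<le> qI"
    using assms(3) by linarith
  then show "r \<le> eps_thr r qI"
    using threshold(1)[OF assms(1)] by blast
  have "qI \<le> (1/(r/1 + 1))^2 - 1/2"
    using assms by simp
  then show "eps_thr r qI \<le> 1"
    using threshold(2)[of 1] by simp
qed

lemma insider_full_effort_above_eps_thr:
  fixes r qI b :: real
  assumes "0 < r" "r \<le> 1" "0 \<le> qI" "qI \<le> (1/(r+1))^2 - 1/2" "eps_thr r qI \<le> b"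
  shows "r \<le> b" "qI \<le> (b/(r/b + b))^2 - 1/2"
proof -
  note eps = eps_thr_bounds[OF assms(1-4)]
  then show "r \<le> b"
    using assms(5) by linarith
  then have "0 < b"
    using assms(1) by linarith
  then show "qI \<le> (b/(r/b + b))^2 - 1/2"
    using steady_share_threshold(2)[OF assms(1) _ _ eps(1)] assms(3,5) by simp
qed

context
  fixes pA qA pD qD pI qI :: real
  assumes pos: "0 < pA" "0 < qA" "0 < pD" "0 < qD"
    and qI: "0 \<le> qI"
begin

lemma gameC_NE_equal_ratios_full_effort:
  assumes "(pA/qA)/pA = pD/qD" "pD/qD \<le> 1" "qI \<le> (1/((pA/qA)/pA + 1))^2 - 1/2"
    and b: "b \<in> {eps_thr (pD/qD) qI..1}"
  shows "gameC_NE pA qA pD qD pI qI ((pD/qD)/b) b 1"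
proof -
  have ratio: "1/qA = pD/qD"
    using assms(1) pos by simp
  have "0 < pD/qD" "qI \<le> (1/(pD/qD + 1))^2 - 1/2"
    using assms ratio pos by simp_all
  note insider = insider_full_effort_above_eps_thr[OF this(1) assms(2) qI this(2)]
  have "mutual_best_response 1 qA pD qD ((pD/qD)/b) b"
    using ratio pos b insider \<open>0 < pD/qD\<close> by (intro mutual_best_response_interior) auto
  then show ?thesis
    using insider b by (intro gameC_NE_full_effort[OF _ qI]) auto
qed

lemma gameD_NE_equal_ratios_full_effort:
  assumes "pA/qA = pD/qD" "pD/qD \<le> 1" "qI \<le> (1/(pA/qA + 1))^2 - 1/2"
    and b: "b \<in> {eps_thr (pD/qD) qI..1}"
  shows "gameD_NE pA qA pD qD pI qI ((pD/qD)/b) b 1"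
proof -
  have "0 < pD/qD" "qI \<le> (1/(pD/qD + 1))^2 - 1/2"
    using assms pos by simp_all
  note insider = insider_full_effort_above_eps_thr[OF this(1) assms(2) qI this(2)]
  have "mutual_best_response pA qA pD qD ((pD/qD)/b) b"
    using assms pos b insider \<open>0 < pD/qD\<close> by (intro mutual_best_response_interior) auto
  then show ?thesis
    using insider b by (intro gameD_NE_full_effort[OF _ qI]) auto
qed

lemma gameC_NE_corner_full_effort:
  assumes "(pA/qA)/pA \<le> 1" "(pA/qA)/pA < pD/qD" "qI \<le> (1/((pA/qA)/pA + 1))^2 - 1/2"
  shows "gameC_NE pA qA pD qD pI qI ((pA/qA)/pA) 1 1"
proof -
  have ratio: "(pA/qA)/pA = 1/qA"
    using pos by simp
  have "mutual_best_response 1 qA pD qD (1/qA) 1"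
    using assms pos unfolding ratio by (intro mutual_best_response_corner) auto
  with assms(3) show ?thesis
    unfolding ratio using qI by (intro gameC_NE_full_effort) auto
qed

lemma gameD_NE_corner_full_effort:
  assumes "pA/qA \<le> 1" "pA/qA < pD/qD" "qI \<le> (1/(pA/qA + 1))^2 - 1/2"
  shows "gameD_NE pA qA pD qD pI qI (pA/qA) 1 1"
proof -
  have "mutual_best_response pA qA pD qD (pA/qA) 1"
    using assms pos by (intro mutual_best_response_corner) auto
  with assms(3) show ?thesis
    using qI by (intro gameD_NE_full_effort) auto
qed

lemma NE_equal_ratios_no_effort_costly_insider:
  assumes "pA/qA = pD/qD" "pD/qD \<le> 1" "(1/(pA/qA + 1))^2 - 1/2 < qI"
    and b: "b \<in> {pD/qD..1}"
  shows "gameC_NE pA qA pD qD pI qI ((pD/qD)/b) b 0 \<and>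
         gameD_NE pA qA pD qD pI qI ((pD/qD)/b) b 0"
proof -
  have "0 < pD/qD"
    using pos by simp
  then have "0 < b"
    using b by auto
  have "b/((pD/qD)/b + b) \<le> 1/((pD/qD)/1 + 1)"
    using \<open>0 < pD/qD\<close> \<open>0 < b\<close> b by (intro steady_share_mono) auto
  moreover have "0 \<le> b/((pD/qD)/b + b)"
    using pos \<open>0 < b\<close> by (intro divide_nonneg_nonneg add_nonneg_nonneg) auto
  ultimately have "(b/((pD/qD)/b + b))^2 \<le> (1/(pD/qD + 1))^2"
    by (auto intro: power_mono)
  then have share: "(b/((pD/qD)/b + b))^2 - 1/2 \<le> qI"
    using assms by simp
  have "mutual_best_response pA qA pD qD ((pD/qD)/b) b"
    using assms pos \<open>0 < pD/qD\<close> by (intro mutual_best_response_interior) auto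
  then show ?thesis
    using share by (rule NE_no_effort[OF _ qI])
qed

lemma NE_equal_ratios_no_effort_below_eps_thr:
  assumes "pA/qA = pD/qD" "pD/qD \<le> 1" "qI \<le> (1/(pA/qA + 1))^2 - 1/2"
    and b: "b \<in> {pD/qD..eps_thr (pD/qD) qI}"
  shows "gameC_NE pA qA pD qD pI qI ((pD/qD)/b) b 0 \<and>
         gameD_NE pA qA pD qD pI qI ((pD/qD)/b) b 0"
proof -
  have "0 < pD/qD" "qI \<le> (1/(pD/qD + 1))^2 - 1/2"
    using assms pos by simp_all
  note eps = eps_thr_bounds[OF this(1) assms(2) qI this(2)]
  have "0 < b"
    using \<open>0 < pD/qD\<close> b by auto
  have "mutual_best_response pA qA pD qD ((pD/qD)/b) b"
    using assms pos eps \<open>0 < pD/qD\<close> by (intro mutual_best_response_interior) auto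
  moreover have "(b/((pD/qD)/b + b))^2 - 1/2 \<le> qI"
    using steady_share_threshold(1)[OF \<open>0 < pD/qD\<close> \<open>0 < b\<close> _ eps(1)] qI b by simp
  ultimately show ?thesis
    by (rule NE_no_effort[OF _ qI])
qed

lemma NE_attacker_corner_no_effort:
  assumes "pA/qA \<le> 1" "pA/qA < pD/qD" "(1/(pA/qA + 1))^2 - 1/2 \<le> qI"
  shows "gameC_NE pA qA pD qD pI qI (pA/qA) 1 0 \<and> gameD_NE pA qA pD qD pI qI (pA/qA) 1 0"
proof -
  have "mutual_best_response pA qA pD qD (pA/qA) 1"
    using assms pos by (intro mutual_best_response_corner) auto
  with assms(3) show ?thesis
    using qI by (intro NE_no_effort) auto
qed

lemma NE_defender_corner_no_effort:
  assumes "pD/qD \<le> 1" "pD/qD < pA/qA"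
  shows "gameC_NE pA qA pD qD pI qI 1 (pD/qD) 0 \<and> gameD_NE pA qA pD qD pI qI 1 (pD/qD) 0"
proof -
  have "(pD/qD)/(1 + pD/qD) \<le> 1/2"
    using assms pos by (simp add: field_simps)
  then have "((pD/qD)/(1 + pD/qD))^2 \<le> (1/2)^2"
    using pos by (intro power_mono) auto
  moreover have "(1/2::real)^2 < 1/2"
    by (simp add: power2_eq_square)
  ultimately have share: "((pD/qD)/(1 + pD/qD))^2 - 1/2 \<le> qI"
    using qI by linarith
  have "mutual_best_response pD qD pA qA (pD/qD) 1"
    using assms pos by (intro mutual_best_response_corner) auto
  then have "mutual_best_response pA qA pD qD 1 (pD/qD)"
    by (simp add: mutual_best_response_swap)
  then show ?thesis
    using share by (rule NE_no_effort[OF _ qI])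
qed

lemma NE_one_one_no_effort:
  assumes "1 < pA/qA" "1 < pD/qD"
  shows "gameC_NE pA qA pD qD pI qI 1 1 0 \<and> gameD_NE pA qA pD qD pI qI 1 1 0"
proof -
  have "mutual_best_response pA qA pD qD 1 1"
    using assms pos by (intro mutual_best_response_one_one) auto
  moreover have "(1/(1 + 1))^2 - 1/2 \<le> qI"
    using qI by (simp add: power2_eq_square)
  ultimately show ?thesis
    by (rule NE_no_effort[OF _ qI])
qed

end

theorem theorem2:
  fixes pA pD pI qA qD qI :: real
  assumes "0 < pA" "pA < 1" "0 < pD" "pD < 1" "0 < pI" "pI < 1"
    and "0 < qA" "0 < qD" "0 \<le> qI"
  shows
   \<comment> \<open>Game C\<close>
   "((pA/qA) / pA = pD/qD \<and> pD/qD \<le> 1 \<and> qI \<le> (1 / ((pA/qA)/pA + 1))^2 - 1/2 \<longrightarrow>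
       (\<forall>b \<in> {eps_thr (pD/qD) qI..1}. gameC_NE pA qA pD qD pI qI ((pD/qD) / b) b 1))
  \<and> ((pA/qA) / pA \<le> 1 \<and> (pA/qA) / pA < pD/qD \<and> qI \<le> (1 / ((pA/qA)/pA + 1))^2 - 1/2 \<longrightarrow>
       gameC_NE pA qA pD qD pI qI ((pA/qA) / pA) 1 1)
   \<comment> \<open>Game D\<close>
  \<and> (pA/qA = pD/qD \<and> pD/qD \<le> 1 \<and> qI \<le> (1 / (pA/qA + 1))^2 - 1/2 \<longrightarrow>
       (\<forall>b \<in> {eps_thr (pD/qD) qI..1}. gameD_NE pA qA pD qD pI qI ((pD/qD) / b) b 1))
  \<and> (pA/qA \<le> 1 \<and> pA/qA < pD/qD \<and> qI \<le> (1 / (pA/qA + 1))^2 - 1/2 \<longrightarrow>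
       gameD_NE pA qA pD qD pI qI (pA/qA) 1 1)
   \<comment> \<open>(i)-(v) for both games\<close>
  \<and> (\<forall>NE \<in> {gameC_NE pA qA pD qD pI qI, gameD_NE pA qA pD qD pI qI}.
      (pA/qA = pD/qD \<and> pD/qD \<le> 1 \<and> qI > (1 / (pA/qA + 1))^2 - 1/2 \<longrightarrow>
         (\<forall>b \<in> {pD/qD..1}. NE ((pD/qD) / b) b 0))
    \<and> (pA/qA = pD/qD \<and> pD/qD \<le> 1 \<and> qI \<le> (1 / (pA/qA + 1))^2 - 1/2 \<longrightarrow>
         (\<forall>b \<in> {pD/qD..eps_thr (pD/qD) qI}. NE ((pD/qD) / b) b 0))
    \<and> (pA/qA \<le> 1 \<and> pA/qA < pD/qD \<and> qI \<ge> (1 / (pA/qA + 1))^2 - 1/2 \<longrightarrow>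
         NE (pA/qA) 1 0)
    \<and> (pD/qD \<le> 1 \<and> pD/qD < pA/qA \<longrightarrow> NE 1 (pD/qD) 0)
    \<and> (pA/qA > 1 \<and> pD/qD > 1 \<longrightarrow> NE 1 1 0))"
proof -
  note pos = assms(1,7,3,8) and qI = assms(9)
  note full_effort =
    gameC_NE_equal_ratios_full_effort[OF pos qI] gameC_NE_corner_full_effort[OF pos qI]
    gameD_NE_equal_ratios_full_effort[OF pos qI] gameD_NE_corner_full_effort[OF pos qI]
  note no_effort =
    NE_equal_ratios_no_effort_costly_insider[OF pos qI]
    NE_equal_ratios_no_effort_below_eps_thr[OF pos qI] NE_attacker_corner_no_effort[OF pos qI]
    NE_defender_corner_no_effort[OF pos qI] NE_one_one_no_effort[OF pos qI]
  show ?thesis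
    by (intro conjI impI ballI; elim conjE insertE emptyE; (hypsubst)?;
        blast intro: full_effort no_effort[THEN conjunct1] no_effort[THEN conjunct2])
qed

end
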